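(* Let $P(\theta,z)=(\theta+\alpha,p_\theta(z))$ be a fibred polynomial dynamics over an irrational rotation, and let $\Gamma\subset\mathbb{T}^1\times\mathbb{C}$ be an attracting invariant $n$-curve for $P$. Then there exists an open set $\mathcal{T}\subset\mathbb{T}^1\times\mathbb{C}$ containing $\Gamma$ such that every point of $\mathcal{T}$ is attracted to $\Gamma$, i.e. for every $(\theta,z)\in\mathcal{T}$, $\operatorname{dist}(P^k(\theta,z),\Gamma)\to0$ as $k\to\infty$. Moreover, for every $\theta\in\mathbb{T}^1$, the fiber $\mathcal{T}_\theta=\{z:(\theta,z)\in\mathcal{T}\}$ consists of $n$ components, each of which contains a point of $\Gamma_\theta=\{z:(\theta,z)\in\Gamma\}$.
   Context: $\mathbb{T}^1=\mathbb{R}/\mathbb{Z}$, $\langle x\rangle$ is the fractional part. A fibred polynomial dynamics over an irrational rotation is a continuous map $P(\theta,z)=(\theta+\alpha,p_\theta(z))$ on $\mathbb{T}^1\times\mathbb{C}$ with $\alpha$ irrational and $p_\theta$ a polynomial whose coefficients depend continuously on $\theta$. An $n$-curve is a set $\Gamma=\{(\langle n\theta\rangle,\tilde\gamma(\theta)):\theta\in\mathbb{T}^1\}$ with $\tilde\gamma:\mathbb{T}^1\to\mathbb{C}$ continuous and injective (an unfolding of $\Gamma$). $\Gamma$ is an invariant $n$-curve for $P$ if for some unfolding $\tilde\gamma$ and some $\tau\in\{0,\dots,n-1\}$, $p_{\langle n\theta\rangle}(\tilde\gamma(\theta))=\tilde\gamma(\theta+\tfrac{\alpha+\tau}{n})$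 for all $\theta$ (i.e. $\tilde\gamma$ is an invariant curve of the lifting $\tilde P_\tau(\theta,z)=(\theta+\frac{\alpha+\tau}{n},p_{\langle n\theta\rangle}(z))$ of $P$ under $(\theta,z)\mapsto(\langle n\theta\rangle,z)$). It is attracting if $\exp\big(\int_{\mathbb{T}^1}\log|p'_{\langle n\theta\rangle}(\tilde\gamma(\theta))|\,d\theta\big)<1$ (with the integrand in $L^1$). *)

theory Defs
  imports "HOL-Analysis.Analysis" "HOL-Computational_Algebra.Polynomial"
begin

text \<open>The circle T^1 = R/Z is represented through its universal cover R:
  functions on T^1 are 1-periodic functions on R, and subsets of T^1 x C are
  subsets of R x C that are invariant under (theta,z) -> (theta+1,z).
  Open sets / distances in T^1 x C correspond to open sets / distances of the
  lifted (periodic) sets in R x C.\<close>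

definition fibred_poly_dynamics :: "real \<Rightarrow> (real \<Rightarrow> complex poly) \<Rightarrow> bool" where
  "fibred_poly_dynamics \<alpha> p \<longleftrightarrow>
     \<alpha> \<notin> \<rat> \<and>
     (\<forall>\<theta>. p (\<theta> + 1) = p \<theta>) \<and>
     (\<exists>d. \<forall>\<theta>. degree (p \<theta>) \<le> d) \<and>
     (\<forall>i. continuous_on UNIV (\<lambda>\<theta>. coeff (p \<theta>) i))"

definition fibred_map :: "real \<Rightarrow> (real \<Rightarrow> complex poly) \<Rightarrow> real \<times> complex \<Rightarrow> real \<times> complex" where
  "fibred_map \<alpha> p x = (fst x + \<alpha>, poly (p (fst x)) (snd x))"

definition is_unfolding :: "(real \<Rightarrow> complex) \<Rightarrow> bool" where
  "is_unfolding \<gamma> \<longleftrightarrow> continuous_on UNIV \<gamma> \<and> (\<forall>t. \<gamma> (t + 1) = \<gamma> t) \<and>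
     (\<forall>s t. \<gamma> s = \<gamma> t \<longrightarrow> s - t \<in> \<int>)"

text \<open>Lift to R x C of the n-curve {(<n theta>, gamma theta)}.\<close>
definition ncurve :: "nat \<Rightarrow> (real \<Rightarrow> complex) \<Rightarrow> (real \<times> complex) set" where
  "ncurve n \<gamma> = {(x, \<gamma> t) | x t. x - real n * t \<in> \<int>}"

definition attracting_invariant_ncurve ::
  "real \<Rightarrow> (real \<Rightarrow> complex poly) \<Rightarrow> nat \<Rightarrow> (real \<times> complex) set \<Rightarrow> bool" where
  "attracting_invariant_ncurve \<alpha> p n \<Gamma> \<longleftrightarrow> n \<ge> 1 \<and>
     (\<exists>\<gamma> \<tau>. is_unfolding \<gamma> \<and> \<Gamma> = ncurve n \<gamma> \<and> \<tau> < n \<and>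
       (\<forall>t. poly (p (frac (real n * t))) (\<gamma> t) = \<gamma> (t + (\<alpha> + real \<tau>) / real n)) \<and>
       (AE t in lebesgue_on {0..1}. poly (pderiv (p (frac (real n * t)))) (\<gamma> t) \<noteq> 0) \<and>
       integrable (lebesgue_on {0..1}) (\<lambda>t. ln (cmod (poly (pderiv (p (frac (real n * t)))) (\<gamma> t)))) \<and>
       exp (integral\<^sup>L (lebesgue_on {0..1}) (\<lambda>t. ln (cmod (poly (pderiv (p (frac (real n * t)))) (\<gamma> t))))) < 1)"

end

(*
  Lifting along theta -> n theta turns the n-curve into the graph of a continuous 1-periodic
  curve gamma, invariant under the skew product (t, z) -> (t + omega, p_(n t) z) over the
  irrational rotation by omega = (alpha + tau) / n.  The Lyapunov integral of
  ln |p'_(n t) (gamma t)| is negative, and stays negative after adding a small eps to |p'|.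
  Since omega is irrational, q omega is within a small s of an integer for some q, so orbit
  segments of the rotation split into Riemann sums of step s; hence for some N all N-step
  Birkhoff sums of ln (|p'| + eps) are uniformly negative, i.e. every product of N consecutive
  factors |p'| + eps is at most some c < 1.  Near gamma the fibre maps are uniformly close to
  their linearisations, so from a uniform distance delta on the distance to the curve decays
  geometrically.  The delta-tube around Gamma is therefore attracted to Gamma, and if delta is
  also less than half the minimal distance between the n points of a fibre of Gamma, each fibre
  of the tube is a disjoint union of n discs centred on Gamma.
*)

theory Submission
  imports Defs
begin

section \<open>Periodic functions on the real line\<close>

lemma periodic_shift_int:
  fixes f :: "real \<Rightarrow> 'a"
  assumes per: "\<And>x. f (x + 1) = f x"
  shows "f (x + of_int k) = f x"
proof (induction k rule: int_induct[where k = 0])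
  case (step1 i)
  then show ?case using per[of "x + of_int i"] by (simp add: add.assoc)
next
  case (step2 i)
  then show ?case using per[of "x + of_int (i - 1)"] by (simp add: add.assoc)
qed simp

lemma periodic_shift_Ints:
  fixes f :: "real \<Rightarrow> 'a"
  assumes "\<And>x. f (x + 1) = f x" and "c \<in> \<int>"
  shows "f (x + c) = f x"
  using assms(2) periodic_shift_int[of f, OF assms(1)] by (auto elim: Ints_cases)

lemma periodic_frac:
  fixes f :: "real \<Rightarrow> 'a"
  assumes "\<And>x. f (x + 1) = f x"
  shows "f (frac x) = f x"
  using periodic_shift_int[of f, OF assms, of "frac x" "\<lfloor>x\<rfloor>"] by (simp add: frac_def)

lemma periodic_range:
  fixes f :: "real \<Rightarrow> 'a"
  assumes "\<And>x. f (x + 1) = f x"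
  shows "range f = f ` {0..1}"
proof -
  have "f x \<in> f ` {0..1}" for x
    using periodic_frac[of f, OF assms, of x] frac_ge_0[of x] frac_lt_1[of x]
    by (metis atLeastAtMost_iff image_eqI less_le_not_le)
  then show ?thesis by auto
qed

lemma periodic_bounded:
  fixes g :: "real \<Rightarrow> 'a::real_normed_vector"
  assumes "continuous_on UNIV g" and "\<And>x. g (x + 1) = g x"
  shows "bounded (range g)"
  unfolding periodic_range[of g, OF assms(2)]
  by (intro compact_imp_bounded compact_continuous_image continuous_on_subset[OF assms(1)]) auto

lemma periodic_uniformly_continuous:
  fixes g :: "real \<Rightarrow> 'a::real_normed_vector"
  assumes cont: "continuous_on UNIV g" and per: "\<And>x. g (x + 1) = g x"
  shows "uniformly_continuous_on UNIV g"
  unfolding uniformly_continuous_on_def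
proof (intro allI impI)
  fix e :: real assume "e > 0"
  have "uniformly_continuous_on {-1..2} g"
    by (intro compact_uniformly_continuous continuous_on_subset[OF cont]) auto
  then obtain d where d: "d > 0"
    and close: "\<And>x y. x \<in> {-1..2} \<Longrightarrow> y \<in> {-1..2} \<Longrightarrow> dist y x < d \<Longrightarrow> dist (g y) (g x) < e"
    by (rule uniformly_continuous_onE[OF _ \<open>e > 0\<close>]) blast
  have "dist (g y) (g x) < e" if "dist y x < min d 1" for x y
  proof -
    define k where "k = \<lfloor>x\<rfloor>"
    have "x - k \<in> {-1..2}" "y - k \<in> {-1..2}" "dist (y - k) (x - k) < d"
      using that k_def by (auto simp: dist_real_def) linarith+
    moreover have "g (x - k) = g x" "g (y - k) = g y"
      using periodic_shift_int[of g, OF per, of "x - k" k] periodic_shift_int[of g, OF per, of "y - k" k]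
      by simp_all
    ultimately show ?thesis using close[of "x - k" "y - k"] by simp
  qed
  then show "\<exists>d>0. \<forall>x\<in>UNIV. \<forall>y\<in>UNIV. dist y x < d \<longrightarrow> dist (g y) (g x) < e"
    using d by (intro exI[of _ "min d 1"]) auto
qed

lemma periodic_integral_shift:
  fixes g :: "real \<Rightarrow> real"
  assumes cont: "continuous_on UNIV g" and per: "\<And>x. g (x + 1) = g x"
  shows "integral {t..t+1} g = integral {0..1} g"
proof -
  define u where "u = frac t"
  have u: "0 \<le> u" "u \<le> 1" using frac_ge_0[of t] frac_lt_1[of t] u_def by auto
  have intg: "g integrable_on {a..b}" for a b
    by (intro integrable_continuous_interval continuous_on_subset[OF cont]) auto
  have shift: "g \<circ> (+) (of_int k) = g" for k
    by (rule ext) (simp add: periodic_shift_int[of g, OF per] add.commute)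
  have "integral {t..t+1} g = integral {u + of_int \<lfloor>t\<rfloor>..u + 1 + of_int \<lfloor>t\<rfloor>} g"
    by (simp add: u_def frac_def)
  also have "\<dots> = integral {u..u+1} g"
    using integral_shift_Icc_real[where f = g and c = "of_int \<lfloor>t\<rfloor>" and a = u and b = "u + 1"] shift
    by simp
  also have "\<dots> = integral {u..1} g + integral {1..u+1} g"
    using Henstock_Kurzweil_Integration.integral_combine[where a = u and c = 1 and b = "u + 1" and f = g] u intg
    by simp
  also have "integral {1..u+1} g = integral {0..u} g"
    using integral_shift_Icc_real[where f = g and c = 1 and a = 0 and b = u] shift[of 1] by simp
  also have "integral {u..1} g + integral {0..u} g = integral {0..1} g"
    using Henstock_Kurzweil_Integration.integral_combine[where a = 0 and c = u and b = 1 and f = g] u intg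
    by simp
  finally show ?thesis .
qed

section \<open>Uniformly negative Birkhoff sums over an irrational rotation\<close>

lemma integral_consecutive_intervals:
  fixes f :: "real \<Rightarrow> real"
  assumes intg: "\<And>a b. f integrable_on {a..b}" and "h \<ge> 0"
  shows "(\<Sum>m<L. integral {x + real m * h..x + real m * h + h} f) = integral {x..x + real L * h} f"
proof (induction L)
  case (Suc L)
  have "integral {x..x + real L * h} f + integral {x + real L * h..x + real L * h + h} f
        = integral {x..x + real L * h + h} f"
    using Henstock_Kurzweil_Integration.integral_combine[where a = x and c = "x + real L * h"
        and b = "x + real L * h + h" and f = f] \<open>h \<ge> 0\<close> intg
    by simp
  then show ?case using Suc by (simp add: algebra_simps)
qed simp

lemma periodic_riemann_sum_le:
  fixes g :: "real \<Rightarrow> real" and L :: nat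
  assumes cont: "continuous_on UNIV g" and per: "\<And>x. g (x + 1) = g x"
    and bound: "\<And>x. \<bar>g x\<bar> \<le> M"
    and osc: "\<And>x y. \<bar>x - y\<bar> \<le> h \<Longrightarrow> g x \<le> g y + e" and "e \<ge> 0"
    and h: "h > 0" "real L * h \<le> 1" "1 < (real L + 1) * h"
  shows "h * (\<Sum>m<L. g (x + real m * h)) \<le> integral {0..1} g + h * M + e"
proof -
  have intg: "g integrable_on {a..b}" for a b
    by (intro integrable_continuous_interval continuous_on_subset[OF cont]) auto
  have cell: "h * g y \<le> integral {y..y + h} g + h * e" for y
  proof -
    have "g y - e \<le> g z" if "z \<in> {y..y + h}" for z
      using osc[of y z] that by (auto simp: abs_le_iff)
    then have "integral {y..y + h} (\<lambda>_. g y - e) \<le> integral {y..y + h} g"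
      by (intro integral_le intg) auto
    then show ?thesis using h by (simp add: algebra_simps)
  qed
  have "h * (\<Sum>m<L. g (x + real m * h)) = (\<Sum>m<L. h * g (x + real m * h))"
    by (simp add: sum_distrib_left)
  also have "\<dots> \<le> (\<Sum>m<L. integral {x + real m * h..x + real m * h + h} g + h * e)"
    using cell by (intro sum_mono) auto
  also have "\<dots> = integral {x..x + real L * h} g + real L * h * e"
    using integral_consecutive_intervals[OF intg, where h = h and L = L and x = x] h
    by (simp add: sum.distrib)
  finally have riemann:
    "h * (\<Sum>m<L. g (x + real m * h)) \<le> integral {x..x + real L * h} g + real L * h * e" .
  have split: "integral {x..x + real L * h} g + integral {x + real L * h..x + 1} g = integral {0..1} g"
    using Henstock_Kurzweil_Integration.integral_combine[where a = x and c = "x + real L * h"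
        and b = "x + 1" and f = g] h intg periodic_integral_shift[OF cont per, of x]
    by simp
  have "norm (integral {x + real L * h..x + 1} g) \<le> M * ((x + 1) - (x + real L * h))"
    using h bound by (intro integral_bound continuous_on_subset[OF cont]) auto
  also have "\<dots> \<le> M * h"
    using h bound[of 0] by (intro mult_left_mono) (auto simp: algebra_simps)
  finally have rest: "\<bar>integral {x + real L * h..x + 1} g\<bar> \<le> h * M" by (simp add: mult.commute)
  have "real L * h * e \<le> e" using h \<open>e \<ge> 0\<close> by (simp add: mult_left_le_one_le)
  with riemann split rest show ?thesis by linarith
qed

lemma nat_floor_inverse_bounds:
  fixes h :: real
  assumes "0 < h" and "h \<le> 1"
  shows "nat \<lfloor>1 / h\<rfloor> > 0" and "real (nat \<lfloor>1 / h\<rfloor>) * h \<le> 1"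
    and "1 < (real (nat \<lfloor>1 / h\<rfloor>) + 1) * h"
proof -
  have "1 \<le> 1 / h" using assms by (simp add: field_simps)
  then have "\<lfloor>1 / h\<rfloor> \<ge> 1" by (simp add: le_floor_iff)
  then have L: "real (nat \<lfloor>1 / h\<rfloor>) = of_int \<lfloor>1 / h\<rfloor>" "nat \<lfloor>1 / h\<rfloor> > 0"
    unfolding zero_less_nat_eq by (simp_all only: of_nat_nat)
  then show "nat \<lfloor>1 / h\<rfloor> > 0" by simp
  have "real (nat \<lfloor>1 / h\<rfloor>) * h \<le> (1 / h) * h"
    unfolding L(1) using assms by (intro mult_right_mono) auto
  then show "real (nat \<lfloor>1 / h\<rfloor>) * h \<le> 1" using assms by simp
  show "1 < (real (nat \<lfloor>1 / h\<rfloor>) + 1) * h"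
    using L(1) assms real_of_int_floor_add_one_gt[of "1 / h"] by (simp add: field_simps)
qed

lemma periodic_riemann_sums_neg:
  fixes g :: "real \<Rightarrow> real"
  assumes cont: "continuous_on UNIV g" and per: "\<And>x. g (x + 1) = g x"
    and neg: "integral {0..1} g < 0"
  shows "\<exists>h0>0. h0 \<le> 1 \<and> (\<forall>h x. 0 < h \<longrightarrow> h < h0 \<longrightarrow> (\<Sum>m<nat \<lfloor>1 / h\<rfloor>. g (x + real m * h)) < 0)"
proof -
  define \<eta> where "\<eta> = - integral {0..1} g"
  have \<eta>: "\<eta> > 0" using neg \<eta>_def by simp
  obtain M where M: "\<And>x. \<bar>g x\<bar> \<le> M"
    using periodic_bounded[of g, OF cont per] by (auto simp: bounded_iff)
  have M0: "M \<ge> 0" using M[of 0] by simp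
  have "\<eta> / 4 > 0" using \<eta> by simp
  then obtain d where d: "d > 0" and close: "\<And>x y. dist y x < d \<Longrightarrow> dist (g y) (g x) < \<eta> / 4"
    by (rule uniformly_continuous_onE[OF periodic_uniformly_continuous[of g, OF cont per]]) blast
  define h0 where "h0 = min (min d 1) (\<eta> / (4 * (M + 1)))"
  have h0: "h0 > 0" "h0 \<le> 1" using d \<eta> M0 by (auto simp: h0_def)
  have "(\<Sum>m<nat \<lfloor>1 / h\<rfloor>. g (x + real m * h)) < 0" if h: "0 < h" "h < h0" for h x
  proof -
    define L where "L = nat \<lfloor>1 / h\<rfloor>"
    have "h \<le> 1" using h h0 by simp
    note L = nat_floor_inverse_bounds[OF h(1) this, folded L_def]
    have osc: "g y \<le> g y' + \<eta> / 4" if "\<bar>y - y'\<bar> \<le> h" for y y'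
    proof -
      have "dist y y' < d" using that h by (simp add: h0_def dist_real_def)
      then show ?thesis using close[of y y'] unfolding dist_real_def by arith
    qed
    have hM: "h * M \<le> \<eta> / 4"
    proof -
      have "h * M \<le> h * (M + 1)" using h by simp
      also have "\<dots> \<le> \<eta> / 4" using h M0 by (simp add: h0_def field_simps)
      finally show ?thesis .
    qed
    have "h * (\<Sum>m<L. g (x + real m * h)) \<le> integral {0..1} g + h * M + \<eta> / 4"
      using periodic_riemann_sum_le[of g, OF cont per M osc _ h(1) L(2,3)] \<eta> by simp
    then have "h * (\<Sum>m<L. g (x + real m * h)) < 0" using hM \<eta> \<eta>_def by linarith
    then show ?thesis using h by (simp add: L_def mult_less_0_iff)
  qed
  with h0 show ?thesis by blast
qed

lemma irrational_rotation_small_step: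
  fixes \<omega> :: real
  assumes "\<omega> \<notin> \<rat>" and "h > 0"
  obtains q :: nat and j :: int where "q > 0" "0 < real q * \<omega> - j" "real q * \<omega> - j < h"
proof -
  define a where "a = min (h / 2) (1 / 2)"
  have a: "0 < a" "a \<le> 1" "2 * a \<le> h" using \<open>h > 0\<close> by (auto simp: a_def)
  obtain q :: nat where "q > 0" and "\<bar>frac (real q * \<omega>) - a\<bar> < a"
    using Kronecker_approx_1_explicit[OF \<open>\<omega> \<notin> \<rat>\<close>, of a a] a by auto
  then show thesis
    using that[of q "\<lfloor>real q * \<omega>\<rfloor>"] a by (auto simp: frac_def)
qed

theorem periodic_birkhoff_sums_neg:
  fixes g :: "real \<Rightarrow> real" and \<omega> :: real
  assumes cont: "continuous_on UNIV g" and per: "\<And>x. g (x + 1) = g x"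
    and irr: "\<omega> \<notin> \<rat>" and neg: "integral {0..1} g < 0"
  shows "\<exists>N>0. \<forall>t. (\<Sum>k<N. g (t + real k * \<omega>)) < 0"
proof -
  obtain h0 where h0: "h0 > 0" "h0 \<le> 1"
    and riemann: "\<And>h x. 0 < h \<Longrightarrow> h < h0 \<Longrightarrow> (\<Sum>m<nat \<lfloor>1 / h\<rfloor>. g (x + real m * h)) < 0"
    using periodic_riemann_sums_neg[OF cont per neg] by blast
  obtain q :: nat and j :: int where q: "q > 0" and s: "0 < real q * \<omega> - j" "real q * \<omega> - j < h0"
    using irrational_rotation_small_step[OF irr h0(1)] by blast
  define s where "s = real q * \<omega> - j"
  define L where "L = nat \<lfloor>1 / s\<rfloor>"
  have L: "L > 0" using nat_floor_inverse_bounds(1)[of s] s h0 by (simp add: s_def L_def)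
  \<comment> \<open>q steps of the rotation advance by the small amount s modulo 1, so an orbit
    segment of length L q splits into q Riemann sums of step s.\<close>
  have "(\<Sum>k<L * q. g (t + real k * \<omega>)) < 0" for t
  proof -
    have "(\<Sum>k<L * q. g (t + real k * \<omega>)) = (\<Sum>m<L. \<Sum>k\<in>{m * q..<m * q + q}. g (t + real k * \<omega>))"
      by (rule sum.nat_group[symmetric])
    also have "\<dots> = (\<Sum>m<L. \<Sum>r<q. g (t + real (r + m * q) * \<omega>))"
      using sum.shift_bounds_nat_ivl[of "\<lambda>k. g (t + real k * \<omega>)" 0 "_ * q" q]
      by (simp add: atLeast0LessThan add.commute)
    also have "\<dots> = (\<Sum>r<q. \<Sum>m<L. g ((t + real r * \<omega>) + real m * s))"
    proof (subst sum.swap, intro sum.cong refl)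
      fix r m
      have "t + real (r + m * q) * \<omega> = ((t + real r * \<omega>) + real m * s) + of_int (int m * j)"
        by (simp add: s_def algebra_simps)
      then show "g (t + real (r + m * q) * \<omega>) = g ((t + real r * \<omega>) + real m * s)"
        using periodic_shift_int[of g, OF per] by metis
    qed
    also have "\<dots> < (\<Sum>r<q. 0)"
      using q s riemann[of s] by (intro sum_strict_mono) (auto simp: s_def L_def)
    finally show ?thesis by simp
  qed
  with L q show ?thesis by (metis nat_0_less_mult_iff)
qed

section \<open>Contraction near an attracting invariant curve\<close>

\<comment> \<open>The AE hypothesis is essential: where F t = 0 we have ln (F t + eps) -> -infinity,
  while Isabelle's ln 0 = 0, so dominated convergence would fail there.\<close>
lemma exists_pos_integral_ln_add_neg:
  fixes F :: "real \<Rightarrow> real"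
  assumes cont: "continuous_on UNIV F" and nonneg: "\<And>t. F t \<ge> 0"
    and ae: "AE t in lebesgue_on {0..1}. F t \<noteq> 0"
    and int: "integrable (lebesgue_on {0..1}) (\<lambda>t. ln (F t))"
    and neg: "integral\<^sup>L (lebesgue_on {0..1}) (\<lambda>t. ln (F t)) < 0"
  shows "\<exists>\<epsilon>>0. integral\<^sup>L (lebesgue_on {0..1}) (\<lambda>t. ln (F t + \<epsilon>)) < 0"
proof -
  define M where "M = lebesgue_on {0..1::real}"
  define s where "s i t = ln (F t + 1 / real (Suc i))" for i t
  have cont_ln: "continuous_on {0..1} (\<lambda>t. ln (F t + c))" if "c > 0" for c
  proof -
    have "F t + c \<noteq> 0" for t using nonneg[of t] that by linarith
    then show ?thesis by (intro continuous_intros continuous_on_subset[OF cont]) auto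
  qed
  have meas: "s i \<in> borel_measurable M" for i
    unfolding M_def s_def by (rule continuous_imp_measurable_on_sets_lebesgue[OF cont_ln]) auto
  define w where "w t = \<bar>ln (F t)\<bar> + \<bar>ln (F t + 1)\<bar>" for t
  have int_w: "integrable M w"
    unfolding w_def M_def
    by (intro Bochner_Integration.integrable_add integrable_abs int continuous_imp_integrable_real cont_ln)
      simp
  have lim: "AE t in M. (\<lambda>i. s i t) \<longlonglongrightarrow> ln (F t)"
    using ae unfolding M_def
  proof eventually_elim
    case (elim t)
    then have "F t > 0" using nonneg[of t] by simp
    moreover have "(\<lambda>i. F t + inverse (real (Suc i))) \<longlonglongrightarrow> F t + 0"
      by (intro tendsto_intros LIMSEQ_inverse_real_of_nat)
    ultimately show ?case unfolding s_def divide_inverse mult_1 by (intro tendsto_ln) auto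
  qed
  have dominated: "AE t in M. norm (s i t) \<le> w t" for i
    using ae unfolding M_def
  proof eventually_elim
    case (elim t)
    then have "F t > 0" using nonneg[of t] by simp
    moreover have "0 < 1 / real (Suc i)" "1 / real (Suc i) \<le> 1" by simp_all
    ultimately have "ln (F t) \<le> s i t" "s i t \<le> ln (F t + 1)"
      unfolding s_def by (auto intro!: ln_mono add_pos_pos simp del: of_nat_Suc)
    then show ?case unfolding w_def by auto
  qed
  have "(\<lambda>t. ln (F t)) \<in> borel_measurable M" using int unfolding M_def by auto
  then have "(\<lambda>i. integral\<^sup>L M (s i)) \<longlonglongrightarrow> integral\<^sup>L M (\<lambda>t. ln (F t))"
    by (rule integral_dominated_convergence[OF _ meas int_w lim dominated])
  from order_tendstoD(2)[OF this neg[folded M_def]]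
  obtain i where "integral\<^sup>L M (s i) < 0" by (auto simp: eventually_sequentially)
  then show ?thesis unfolding M_def s_def by (intro exI[of _ "1 / real (Suc i)"]) auto
qed

lemma continuous_on_poly_family:
  fixes P :: "'a::topological_space \<Rightarrow> 'b::real_normed_field poly"
  assumes coeff: "\<And>i. continuous_on UNIV (\<lambda>t. coeff (P t) i)" and degree: "\<And>t. degree (P t) \<le> d"
  shows "continuous_on UNIV (\<lambda>x. poly (P (fst x)) (snd x))"
proof -
  have "poly (P t) z = poly (\<Sum>i\<le>d. monom (coeff (P t) i) i) z" for t z
    using poly_as_sum_of_monoms'[OF degree[of t]] by simp
  then have "poly (P t) z = (\<Sum>i\<le>d. coeff (P t) i * z ^ i)" for t z
    by (simp add: poly_sum poly_monom)
  moreover have "continuous_on UNIV (\<lambda>x. coeff (P (fst x)) i)" for i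
    by (rule continuous_on_compose2[OF coeff]) (auto intro: continuous_intros)
  ultimately show ?thesis by (auto intro!: continuous_intros)
qed

lemma continuous_on_pderiv_family:
  fixes P :: "'a::topological_space \<Rightarrow> 'b::real_normed_field poly"
  assumes coeff: "\<And>i. continuous_on UNIV (\<lambda>t. coeff (P t) i)" and degree: "\<And>t. degree (P t) \<le> d"
  shows "continuous_on UNIV (\<lambda>x. poly (pderiv (P (fst x))) (snd x))"
proof (rule continuous_on_poly_family)
  show "continuous_on UNIV (\<lambda>t. coeff (pderiv (P t)) i)" for i
    unfolding coeff_pderiv by (intro continuous_intros coeff)
  show "degree (pderiv (P t)) \<le> d" for t
    using degree[of t] by (simp add: degree_pderiv)
qed

lemma field_differentiable_linear_bound:
  fixes f f' :: "complex \<Rightarrow> complex"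
  assumes deriv: "\<And>u. (f has_field_derivative f' u) (at u)"
    and close: "\<And>u. u \<in> cball w r \<Longrightarrow> norm (f' u - f' w) \<le> \<epsilon>"
    and z: "z \<in> cball w r"
  shows "norm (f z - f w) \<le> (norm (f' w) + \<epsilon>) * norm (z - w)"
proof -
  have "((\<lambda>u. f u - f' w * u) has_field_derivative f' u - f' w * 1) (at u)" for u
    by (rule DERIV_diff[OF deriv DERIV_cmult[OF DERIV_ident]])
  then have "((\<lambda>u. f u - f' w * u) has_field_derivative f' u - f' w) (at u within cball w r)" for u
    by (simp add: has_field_derivative_at_within)
  then have "norm ((f z - f' w * z) - (f w - f' w * w)) \<le> \<epsilon> * norm (z - w)"
    using close z
    by (intro field_differentiable_bound[of "cball w r"]) (auto intro: order_trans[OF zero_le_dist])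
  then have "norm (f z - f w - f' w * (z - w)) \<le> \<epsilon> * norm (z - w)"
    by (simp add: algebra_simps)
  moreover have "norm (f z - f w) \<le> norm (f z - f w - f' w * (z - w)) + norm (f' w) * norm (z - w)"
    using norm_triangle_ineq[of "f z - f w - f' w * (z - w)" "f' w * (z - w)"] by (simp add: norm_mult)
  ultimately show ?thesis by (simp add: algebra_simps)
qed

lemma periodic_uniform_linear_bound:
  fixes f f' :: "real \<Rightarrow> complex \<Rightarrow> complex" and \<gamma> :: "real \<Rightarrow> complex"
  assumes deriv: "\<And>t u. (f t has_field_derivative f' t u) (at u)"
    and cont': "continuous_on UNIV (\<lambda>x. f' (fst x) (snd x))"
    and per: "\<And>t. f (t + 1) = f t" and per': "\<And>t. f' (t + 1) = f' t"
    and cont\<gamma>: "continuous_on UNIV \<gamma>" and per\<gamma>: "\<And>t. \<gamma> (t + 1) = \<gamma> t"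
    and "\<epsilon> > 0"
  shows "\<exists>r>0. \<forall>t z. cmod (z - \<gamma> t) \<le> r \<longrightarrow>
            cmod (f t z - f t (\<gamma> t)) \<le> (cmod (f' t (\<gamma> t)) + \<epsilon>) * cmod (z - \<gamma> t)"
proof -
  obtain B where B: "\<And>t. cmod (\<gamma> t) \<le> B"
    using periodic_bounded[OF cont\<gamma> per\<gamma>] by (auto simp: bounded_iff)
  define K where "K = {0..1::real} \<times> cball (0::complex) (B + 1)"
  have "uniformly_continuous_on K (\<lambda>x. f' (fst x) (snd x))"
    unfolding K_def
    by (intro compact_uniformly_continuous continuous_on_subset[OF cont'] compact_Times compact_Icc
        compact_cball) auto
  then obtain r0 where r0: "r0 > 0"
    and close: "\<And>x x'. x \<in> K \<Longrightarrow> x' \<in> K \<Longrightarrow> dist x' x < r0 \<Longrightarrow>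
                  dist (f' (fst x') (snd x')) (f' (fst x) (snd x)) < \<epsilon>"
    by (rule uniformly_continuous_onE[OF _ \<open>\<epsilon> > 0\<close>]) blast
  define r where "r = min (r0 / 2) 1"
  have r: "r > 0" "r < r0" "r \<le> 1" using r0 by (auto simp: r_def)
  have bound: "cmod (f t z - f t (\<gamma> t)) \<le> (cmod (f' t (\<gamma> t)) + \<epsilon>) * cmod (z - \<gamma> t)"
    if t: "t \<in> {0..1}" and z: "cmod (z - \<gamma> t) \<le> r" for t z
  proof (rule field_differentiable_linear_bound[OF deriv])
    show "z \<in> cball (\<gamma> t) r" using z by (simp add: dist_norm norm_minus_commute)
    fix u assume u: "u \<in> cball (\<gamma> t) r"
    have "cmod u \<le> cmod (\<gamma> t) + dist (\<gamma> t) u"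
      using norm_triangle_ineq[of "\<gamma> t" "u - \<gamma> t"] by (simp add: dist_norm norm_minus_commute)
    then have "(t, u) \<in> K" "(t, \<gamma> t) \<in> K" using B[of t] u t r by (auto simp: K_def)
    moreover have "dist (t, u) (t, \<gamma> t) < r0" using u r by (simp add: dist_Pair_Pair dist_commute)
    ultimately show "cmod (f' t u - f' t (\<gamma> t)) \<le> \<epsilon>"
      using close by (fastforce simp: dist_norm)
  qed
  have "cmod (f t z - f t (\<gamma> t)) \<le> (cmod (f' t (\<gamma> t)) + \<epsilon>) * cmod (z - \<gamma> t)"
    if "cmod (z - \<gamma> t) \<le> r" for t z
    using bound[of "frac t" z] that frac_ge_0[of t] frac_lt_1[of t]
      periodic_frac[of f, OF per] periodic_frac[of f', OF per'] periodic_frac[of \<gamma>, OF per\<gamma>]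
    by (auto simp: less_imp_le)
  with r show ?thesis by blast
qed

lemma block_product_bound:
  fixes e a :: "nat \<Rightarrow> real"
  assumes step: "\<And>k. e k \<le> r \<Longrightarrow> e (Suc k) \<le> a k * e k"
    and e_nonneg: "\<And>k. e k \<ge> 0" and a_bounds: "\<And>k. 0 \<le> a k \<and> a k \<le> A" and "A \<ge> 1"
    and start: "e j \<le> r / A ^ N" and "i \<le> N"
  shows "e (j + i) \<le> (\<Prod>k<i. a (j + k)) * e j"
  using \<open>i \<le> N\<close>
proof (induction i)
  case (Suc i)
  then have IH: "e (j + i) \<le> (\<Prod>k<i. a (j + k)) * e j" by simp
  have "(\<Prod>k<i. a (j + k)) * e j \<le> A ^ i * e j"
    using a_bounds e_nonneg \<open>A \<ge> 1\<close> by (intro mult_right_mono prod_le_power) auto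
  also have "\<dots> \<le> A ^ N * e j"
    using \<open>A \<ge> 1\<close> Suc.prems e_nonneg[of j] by (intro mult_right_mono power_increasing) auto
  also have "\<dots> \<le> r"
    using start \<open>A \<ge> 1\<close> by (simp add: field_simps)
  finally have "e (Suc (j + i)) \<le> a (j + i) * e (j + i)" using IH step by simp
  also have "\<dots> \<le> a (j + i) * ((\<Prod>k<i. a (j + k)) * e j)"
    using IH a_bounds by (simp add: mult_left_mono)
  finally show ?case by (simp add: algebra_simps)
qed simp

lemma tendsto_zero_block_contraction:
  fixes e a :: "nat \<Rightarrow> real"
  assumes step: "\<And>k. e k \<le> r \<Longrightarrow> e (Suc k) \<le> a k * e k"
    and e_nonneg: "\<And>k. e k \<ge> 0" and a_bounds: "\<And>k. 0 \<le> a k \<and> a k \<le> A" and A: "A \<ge> 1"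
    and "N > 0" and "c < 1" and contract: "\<And>j. (\<Prod>k<N. a (j + k)) \<le> c"
    and start: "e 0 \<le> r / A ^ N"
  shows "e \<longlonglongrightarrow> 0"
proof -
  have "c \<ge> 0" using contract[of 0] a_bounds prod_nonneg[of "{..<N}" a] by fastforce
  have block: "e (m * N) \<le> c ^ m * e 0 \<and> e (m * N) \<le> r / A ^ N" for m
  proof (induction m)
    case (Suc m)
    have "e (Suc m * N) = e (m * N + N)" by (simp add: add.commute)
    also have "\<dots> \<le> (\<Prod>k<N. a (m * N + k)) * e (m * N)"
      using Suc.IH
      by (intro block_product_bound[where e = e and a = a and r = r and A = A,
            OF step e_nonneg a_bounds A]) auto
    also have "\<dots> \<le> c * e (m * N)"
      using contract e_nonneg by (simp add: mult_right_mono)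
    also have "\<dots> \<le> c * (c ^ m * e 0)"
      using Suc.IH \<open>c \<ge> 0\<close> by (simp add: mult_left_mono)
    finally have "e (Suc m * N) \<le> c ^ Suc m * e 0" by (simp add: mult.assoc)
    moreover have "c ^ Suc m * e 0 \<le> e 0"
      using \<open>c \<ge> 0\<close> \<open>c < 1\<close> e_nonneg[of 0] by (intro mult_left_le_one_le power_le_one) auto
    ultimately show ?case using start by simp
  qed (use start in simp)
  have bound: "e k \<le> A ^ N * e 0 * c ^ (k div N)" for k
  proof -
    have "e k = e (k div N * N + k mod N)" by simp
    also have "\<dots> \<le> (\<Prod>i<k mod N. a (k div N * N + i)) * e (k div N * N)"
      using block \<open>N > 0\<close>
      by (intro block_product_bound[where e = e and a = a and r = r and A = A and N = N,
            OF step e_nonneg a_bounds A]) auto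
    also have "\<dots> \<le> A ^ N * e (k div N * N)"
      using a_bounds A \<open>N > 0\<close> e_nonneg by (intro mult_right_mono prod_le_power) auto
    also have "\<dots> \<le> A ^ N * (c ^ (k div N) * e 0)"
      using block A by (intro mult_left_mono) auto
    finally show ?thesis by (simp add: algebra_simps)
  qed
  have "(\<lambda>k. c ^ (k div N)) \<longlonglongrightarrow> 0"
    using LIMSEQ_power_zero[of c] \<open>c \<ge> 0\<close> \<open>c < 1\<close> filterlim_compose
      filterlim_at_top_div_const_nat[OF \<open>N > 0\<close>]
    by auto
  then have "(\<lambda>k. A ^ N * e 0 * c ^ (k div N)) \<longlonglongrightarrow> 0"
    by (rule tendsto_mult_right_zero)
  then show ?thesis
    by (rule Lim_null_comparison[rotated]) (use bound e_nonneg in simp)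
qed

\<comment> \<open>The lifting of the paper: an invariant n-curve with unfolding gamma and shift tau becomes
  an invariant graph of the skew product with fibre maps Q t = p (n t) over the rotation by
  omega = (alpha + tau) / n.\<close>
locale attracting_curve =
  fixes \<omega> :: real and Q :: "real \<Rightarrow> complex poly" and \<gamma> :: "real \<Rightarrow> complex"
  assumes irrational: "\<omega> \<notin> \<rat>"
    and coeff_continuous: "\<And>i. continuous_on UNIV (\<lambda>t. coeff (Q t) i)"
    and degree_bounded: "\<exists>d. \<forall>t. degree (Q t) \<le> d"
    and Q_periodic: "\<And>t. Q (t + 1) = Q t"
    and curve_continuous: "continuous_on UNIV \<gamma>"
    and curve_periodic: "\<And>t. \<gamma> (t + 1) = \<gamma> t"
    and invariant: "\<And>t. poly (Q t) (\<gamma> t) = \<gamma> (t + \<omega>)"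
    and multiplier_nonzero: "AE t in lebesgue_on {0..1}. poly (pderiv (Q t)) (\<gamma> t) \<noteq> 0"
    and integrable_ln_multiplier:
      "integrable (lebesgue_on {0..1}) (\<lambda>t. ln (cmod (poly (pderiv (Q t)) (\<gamma> t))))"
    and lyapunov_neg: "integral\<^sup>L (lebesgue_on {0..1}) (\<lambda>t. ln (cmod (poly (pderiv (Q t)) (\<gamma> t)))) < 0"
begin

definition multiplier :: "real \<Rightarrow> real" where
  "multiplier t = cmod (poly (pderiv (Q t)) (\<gamma> t))"

lemma continuous_pderiv: "continuous_on UNIV (\<lambda>x. poly (pderiv (Q (fst x))) (snd x))"
  using degree_bounded continuous_on_pderiv_family[OF coeff_continuous] by blast

lemma multiplier_continuous: "continuous_on UNIV multiplier"
proof -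
  have "continuous_on UNIV (\<lambda>t. poly (pderiv (Q (fst (t, \<gamma> t)))) (snd (t, \<gamma> t)))"
    by (rule continuous_on_compose2[OF continuous_pderiv])
      (auto intro!: continuous_intros curve_continuous)
  then show ?thesis unfolding multiplier_def by (auto intro: continuous_intros)
qed

lemma multiplier_nonneg: "multiplier t \<ge> 0"
  by (simp add: multiplier_def)

lemma multiplier_periodic: "multiplier (t + 1) = multiplier t"
  by (simp add: multiplier_def Q_periodic curve_periodic)

lemma multiplier_products_contract:
  obtains \<epsilon> N c where "\<epsilon> > 0" "N > 0" "c < 1" "\<And>t. (\<Prod>k<N. multiplier (t + real k * \<omega>) + \<epsilon>) \<le> c"
proof -
  have "AE t in lebesgue_on {0..1}. multiplier t \<noteq> 0"
    using multiplier_nonzero by (simp add: multiplier_def)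
  moreover have "integrable (lebesgue_on {0..1}) (\<lambda>t. ln (multiplier t))"
    "integral\<^sup>L (lebesgue_on {0..1}) (\<lambda>t. ln (multiplier t)) < 0"
    using integrable_ln_multiplier lyapunov_neg by (simp_all add: multiplier_def)
  ultimately obtain \<epsilon> where \<epsilon>: "\<epsilon> > 0"
    and J_neg: "integral\<^sup>L (lebesgue_on {0..1}) (\<lambda>t. ln (multiplier t + \<epsilon>)) < 0"
    using exists_pos_integral_ln_add_neg[OF multiplier_continuous] by (auto simp: multiplier_def)
  define J where "J = integral\<^sup>L (lebesgue_on {0..1}) (\<lambda>t. ln (multiplier t + \<epsilon>))"
  have pos: "multiplier t + \<epsilon> > 0" for t using \<epsilon> multiplier_nonneg[of t] by linarith
  have cont_ln: "continuous_on S (\<lambda>t. ln (multiplier t + \<epsilon>))" for S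
    using pos by (intro continuous_intros continuous_on_subset[OF multiplier_continuous])
      (auto simp: less_imp_neq[symmetric])
  define G where "G t = ln (multiplier t + \<epsilon>) - J / 2" for t
  have "integral {0..1} (\<lambda>t. ln (multiplier t + \<epsilon>)) = J"
    unfolding J_def
    by (intro lebesgue_integral_eq_integral[symmetric] continuous_imp_integrable_real cont_ln) simp
  then have "integral {0..1} G = J / 2"
    unfolding G_def by (subst integral_diff) (auto intro: integrable_continuous_interval cont_ln)
  then have "integral {0..1} G < 0" using J_neg by (simp add: J_def)
  moreover have "continuous_on UNIV G" unfolding G_def by (intro continuous_intros cont_ln)
  moreover have "G (t + 1) = G t" for t by (simp add: G_def multiplier_periodic)
  ultimately obtain N where N: "N > 0" and sums: "\<And>t. (\<Sum>k<N. G (t + real k * \<omega>)) < 0"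
    using periodic_birkhoff_sums_neg[of G, OF _ _ irrational] by blast
  have "(\<Prod>k<N. multiplier (t + real k * \<omega>) + \<epsilon>) \<le> exp (real N * J / 2)" for t
  proof -
    have "(\<Prod>k<N. multiplier (t + real k * \<omega>) + \<epsilon>) = exp (\<Sum>k<N. ln (multiplier (t + real k * \<omega>) + \<epsilon>))"
      using pos by (simp add: exp_sum)
    also have "\<dots> \<le> exp (real N * J / 2)"
      using sums[of t] by (simp add: G_def sum_subtractf)
    finally show ?thesis .
  qed
  moreover have "exp (real N * J / 2) < 1" using N J_neg by (simp add: J_def mult_pos_neg)
  ultimately show thesis using that \<epsilon> N by blast
qed

theorem uniform_basin:
  obtains \<delta> where "\<delta> > 0"
    "\<And>t zs. cmod (zs 0 - \<gamma> t) < \<delta> \<Longrightarrow> (\<And>k. zs (Suc k) = poly (Q (t + real k * \<omega>)) (zs k)) \<Longrightarrow>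
       (\<lambda>k. cmod (zs k - \<gamma> (t + real k * \<omega>))) \<longlonglongrightarrow> 0"
proof -
  obtain \<epsilon> N c where \<epsilon>: "\<epsilon> > 0" and N: "N > 0" and c: "c < 1"
    and contract: "\<And>t. (\<Prod>k<N. multiplier (t + real k * \<omega>) + \<epsilon>) \<le> c"
    using multiplier_products_contract by blast
  obtain r where r: "r > 0"
    and linear: "\<And>t z. cmod (z - \<gamma> t) \<le> r \<Longrightarrow>
                   cmod (poly (Q t) z - poly (Q t) (\<gamma> t)) \<le> (multiplier t + \<epsilon>) * cmod (z - \<gamma> t)"
    using periodic_uniform_linear_bound[of "\<lambda>t. poly (Q t)" "\<lambda>t. poly (pderiv (Q t))",
        OF poly_DERIV continuous_pderiv _ _ curve_continuous curve_periodic \<epsilon>]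
    by (auto simp: Q_periodic multiplier_def)
  obtain M where M: "\<And>t. multiplier t \<le> M"
    using periodic_bounded[OF multiplier_continuous multiplier_periodic]
    by (force simp: bounded_iff abs_le_iff)
  define A where "A = M + \<epsilon> + 1"
  have "M \<ge> 0" using M[of 0] multiplier_nonneg[of 0] by linarith
  then have A: "A \<ge> 1" using \<epsilon> by (simp add: A_def)
  have a_bounds: "0 \<le> multiplier t + \<epsilon> \<and> multiplier t + \<epsilon> \<le> A" for t
    using M[of t] multiplier_nonneg[of t] \<epsilon> by (simp add: A_def)
  \<comment> \<open>Within a block of N steps the distance to the curve grows by at most A ^ N, so orbits
    starting closer than r / A ^ N never leave the region where the linear bound holds.\<close>
  show thesis
  proof (rule that[of "r / A ^ N"])
    show "r / A ^ N > 0" using r A by simp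
    fix t zs
    assume start: "cmod (zs 0 - \<gamma> t) < r / A ^ N"
      and orbit: "\<And>k. zs (Suc k) = poly (Q (t + real k * \<omega>)) (zs k)"
    have "\<gamma> (t + real (Suc k) * \<omega>) = poly (Q (t + real k * \<omega>)) (\<gamma> (t + real k * \<omega>))" for k
      by (simp add: invariant algebra_simps)
    then have step: "cmod (zs (Suc k) - \<gamma> (t + real (Suc k) * \<omega>))
                       \<le> (multiplier (t + real k * \<omega>) + \<epsilon>) * cmod (zs k - \<gamma> (t + real k * \<omega>))"
      if "cmod (zs k - \<gamma> (t + real k * \<omega>)) \<le> r" for k
      using linear[OF that] by (simp add: orbit)
    have contract': "(\<Prod>k<N. multiplier (t + real (j + k) * \<omega>) + \<epsilon>) \<le> c" for j
      using contract[of "t + real j * \<omega>"] by (simp add: algebra_simps)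
    show "(\<lambda>k. cmod (zs k - \<gamma> (t + real k * \<omega>))) \<longlonglongrightarrow> 0"
      by (rule tendsto_zero_block_contraction[where a = "\<lambda>k. multiplier (t + real k * \<omega>) + \<epsilon>"
            and r = r and A = A and N = N and c = c, OF step _ a_bounds A N c contract'])
        (use start in auto)
  qed
qed

end

section \<open>Fibres of n-curves and their neighbourhoods\<close>

lemma ncurve_shift_iff: "(x + 1, c) \<in> ncurve n \<gamma> \<longleftrightarrow> (x, c) \<in> ncurve n \<gamma>"
proof -
  have "x + 1 - real n * t \<in> \<int> \<longleftrightarrow> x - real n * t \<in> \<int>" for t
  proof
    assume "x + 1 - real n * t \<in> \<int>"
    then have "(x + 1 - real n * t) - 1 \<in> \<int>" by (rule Ints_diff) simp_all
    then show "x - real n * t \<in> \<int>" by simp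
  next
    assume "x - real n * t \<in> \<int>"
    then have "(x - real n * t) + 1 \<in> \<int>" by (rule Ints_add) simp_all
    then show "x + 1 - real n * t \<in> \<int>" by (simp add: algebra_simps)
  qed
  then show ?thesis by (simp add: ncurve_def)
qed

lemma ncurve_fiber:
  assumes per: "\<And>t. \<gamma> (t + 1) = \<gamma> t" and "n > 0"
  shows "{c. (\<theta>, c) \<in> ncurve n \<gamma>} = (\<lambda>k. \<gamma> ((\<theta> + real k) / real n)) ` {..<n}"
proof (intro equalityI subsetI)
  fix c assume "c \<in> {c. (\<theta>, c) \<in> ncurve n \<gamma>}"
  then obtain t j where c: "c = \<gamma> t" and j: "\<theta> - real n * t = of_int j"
    by (auto simp: ncurve_def elim!: Ints_cases)
  define k where "k = nat ((- j) mod int n)"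
  define q where "q = (- j) div int n"
  have k: "k < n" "int k = (- j) mod int n" using \<open>n > 0\<close> by (simp_all add: k_def nat_less_iff)
  have "- j = int n * q + int k" using k(2) by (simp add: q_def)
  then have "real_of_int (- j) = real n * of_int q + real k"
    using arg_cong[where f = real_of_int] by fastforce
  then have "(\<theta> + real k) / real n = t + of_int (- q)"
    using j \<open>n > 0\<close> by (simp add: field_simps)
  then have "\<gamma> ((\<theta> + real k) / real n) = c"
    using c periodic_shift_int[of \<gamma>, OF per, of t "- q"] by simp
  with k show "c \<in> (\<lambda>k. \<gamma> ((\<theta> + real k) / real n)) ` {..<n}" by force
next
  fix c assume "c \<in> (\<lambda>k. \<gamma> ((\<theta> + real k) / real n)) ` {..<n}"
  then obtain k where c: "c = \<gamma> ((\<theta> + real k) / real n)" by auto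
  have "\<theta> - real n * ((\<theta> + real k) / real n) = - real k" using \<open>n > 0\<close> by (simp add: field_simps)
  then show "c \<in> {c. (\<theta>, c) \<in> ncurve n \<gamma>}" using c by (force simp: ncurve_def)
qed

lemma fraction_not_Ints:
  fixes k n :: nat
  assumes "0 < k" "k < n"
  shows "real k / real n \<notin> \<int>"
proof
  assume "real k / real n \<in> \<int>"
  then obtain j where j: "real k / real n = of_int j" by (auto elim: Ints_cases)
  have "0 < real k / real n" "real k / real n < 1" using assms by auto
  then have "0 < j" "j < 1" using j by linarith+
  then show False by simp
qed

lemma card_ncurve_fiber:
  assumes "is_unfolding \<gamma>" and "n > 0"
  shows "card {c. (\<theta>, c) \<in> ncurve n \<gamma>} = n"
proof -
  have inj: "\<gamma> s = \<gamma> t \<Longrightarrow> s - t \<in> \<int>" and per: "\<gamma> (t + 1) = \<gamma> t" for s t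
    using assms(1) by (auto simp: is_unfolding_def)
  have "inj_on (\<lambda>k. \<gamma> ((\<theta> + real k) / real n)) {..<n}"
  proof (rule linorder_inj_onI', rule notI)
    fix k k' assume "k \<in> {..<n}" "k' \<in> {..<n}" "k < k'"
      and eq: "\<gamma> ((\<theta> + real k) / real n) = \<gamma> ((\<theta> + real k') / real n)"
    from eq[symmetric] have "(\<theta> + real k') / real n - (\<theta> + real k) / real n \<in> \<int>" by (rule inj)
    moreover have "(\<theta> + real k') / real n - (\<theta> + real k) / real n = real (k' - k) / real n"
      using \<open>k < k'\<close> \<open>n > 0\<close> by (simp add: field_simps of_nat_diff)
    moreover have "0 < k' - k" "k' - k < n" using \<open>k < k'\<close> \<open>k' \<in> {..<n}\<close> by auto
    ultimately show False using fraction_not_Ints[of "k' - k" n] by auto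
  qed
  then show ?thesis using ncurve_fiber[of \<gamma>, OF per \<open>n > 0\<close>] by (simp add: card_image)
qed

lemma unfolding_shift_separated:
  assumes "is_unfolding \<gamma>"
  obtains m where "m > 0" "\<And>s k. k \<in> {1..<n} \<Longrightarrow> m \<le> dist (\<gamma> s) (\<gamma> (s + real k / real n))"
proof -
  have cont: "continuous_on UNIV \<gamma>" and per: "\<And>t. \<gamma> (t + 1) = \<gamma> t"
    and inj: "\<And>s t. \<gamma> s = \<gamma> t \<Longrightarrow> s - t \<in> \<int>"
    using assms by (auto simp: is_unfolding_def)
  \<comment> \<open>By periodicity it suffices to bound the distances over the compact set K of
    parameter pairs with s in [0, 1].\<close>
  define K where "K = (\<Union>k\<in>{1..<n}. (\<lambda>s. (s, s + real k / real n)) ` {0..1})"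
  define D where "D = (\<lambda>x. dist (\<gamma> (fst x)) (\<gamma> (snd x))) ` K"
  have "compact ((\<lambda>s. (s, s + real k / real n)) ` {0..1})" for k
    by (intro compact_continuous_image continuous_on_Pair continuous_on_id continuous_on_add
        continuous_on_const compact_Icc)
  then have "compact K" unfolding K_def by (intro compact_UN) auto
  moreover have "continuous_on UNIV (\<lambda>x :: real \<times> real. \<gamma> (fst x))"
    by (rule continuous_on_compose2[OF cont continuous_on_fst[OF continuous_on_id]]) simp
  moreover have "continuous_on UNIV (\<lambda>x :: real \<times> real. \<gamma> (snd x))"
    by (rule continuous_on_compose2[OF cont continuous_on_snd[OF continuous_on_id]]) simp
  ultimately have compact: "compact D"
    unfolding D_def
    by (metis compact_continuous_image continuous_on_dist continuous_on_subset subset_UNIV)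
  have zero: "0 \<notin> D"
  proof
    assume "0 \<in> D"
    then obtain k s where k: "k \<in> {1..<n}" and eq: "\<gamma> s = \<gamma> (s + real k / real n)"
      by (auto simp: D_def K_def)
    from eq have "s - (s + real k / real n) \<in> \<int>" by (rule inj)
    then show False using fraction_not_Ints[of k n] k by simp
  qed
  obtain m where m: "m > 0" and m_le: "\<And>x. x \<in> D \<Longrightarrow> m \<le> dist 0 x"
    using separate_point_closed[OF compact_imp_closed[OF compact] zero] by blast
  have "m \<le> dist (\<gamma> s) (\<gamma> (s + real k / real n))" if k: "k \<in> {1..<n}" for s k
  proof -
    have "\<gamma> (s + real k / real n) = \<gamma> ((frac s + real k / real n) + of_int \<lfloor>s\<rfloor>)"
      by (simp add: frac_def)
    also have "\<dots> = \<gamma> (frac s + real k / real n)" by (rule periodic_shift_int[of \<gamma>, OF per])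
    finally have "\<gamma> (s + real k / real n) = \<gamma> (frac s + real k / real n)" .
    moreover have "\<gamma> s = \<gamma> (frac s)" using periodic_frac[of \<gamma>, OF per] by simp
    moreover have "(frac s, frac s + real k / real n) \<in> K"
      unfolding K_def using k frac_ge_0[of s] frac_lt_1[of s]
      by (intro UN_I[of k] image_eqI[of _ _ "frac s"]) auto
    then have "dist (\<gamma> (frac s)) (\<gamma> (frac s + real k / real n)) \<in> D"
      unfolding D_def by (rule image_eqI[rotated]) simp
    ultimately show ?thesis using m_le by fastforce
  qed
  with m show thesis by (rule that)
qed

lemma ncurve_fiber_separated:
  assumes "is_unfolding \<gamma>" and "n > 0"
  obtains m where "m > 0"
    "\<And>\<theta> c c'. (\<theta>, c) \<in> ncurve n \<gamma> \<Longrightarrow> (\<theta>, c') \<in> ncurve n \<gamma> \<Longrightarrow> c \<noteq> c' \<Longrightarrow> m \<le> dist c c'"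
proof -
  obtain m where m: "m > 0"
    and shift: "\<And>s k. k \<in> {1..<n} \<Longrightarrow> m \<le> dist (\<gamma> s) (\<gamma> (s + real k / real n))"
    using unfolding_shift_separated[OF assms(1)] by blast
  have sep: "m \<le> dist (\<gamma> ((\<theta> + real k) / real n)) (\<gamma> ((\<theta> + real k') / real n))"
    if "k < k'" "k' < n" for \<theta> k k'
  proof -
    have eq: "(\<theta> + real k') / real n = (\<theta> + real k) / real n + real (k' - k) / real n"
      using that \<open>n > 0\<close> by (simp add: field_simps of_nat_diff)
    have "k' - k \<in> {1..<n}" using that by auto
    then show ?thesis unfolding eq by (rule shift)
  qed
  have per: "\<And>t. \<gamma> (t + 1) = \<gamma> t" using assms(1) by (simp add: is_unfolding_def)
  show thesis
  proof (rule that[OF m])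
    fix \<theta> c c' assume "(\<theta>, c) \<in> ncurve n \<gamma>" "(\<theta>, c') \<in> ncurve n \<gamma>" "c \<noteq> c'"
    then have "c \<in> (\<lambda>k. \<gamma> ((\<theta> + real k) / real n)) ` {..<n}"
      "c' \<in> (\<lambda>k. \<gamma> ((\<theta> + real k) / real n)) ` {..<n}"
      using ncurve_fiber[of \<gamma>, OF per \<open>n > 0\<close>, of \<theta>] by auto
    then obtain k k' where "k < n" "k' < n"
      and c: "c = \<gamma> ((\<theta> + real k) / real n)" and c': "c' = \<gamma> ((\<theta> + real k') / real n)"
      by auto
    have "k \<noteq> k'" using \<open>c \<noteq> c'\<close> unfolding c c' by auto
    then consider "k < k'" | "k' < k" by linarith
    then show "m \<le> dist c c'"
      using sep[of k k' \<theta>] sep[of k' k \<theta>] \<open>k < n\<close> \<open>k' < n\<close> unfolding c c'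
      by cases (simp_all add: dist_commute)
  qed
qed

definition fiberwise_nbhd :: "('a \<times> 'b::metric_space) set \<Rightarrow> real \<Rightarrow> ('a \<times> 'b) set" where
  "fiberwise_nbhd \<Gamma> \<delta> = {(x, z). \<exists>c. (x, c) \<in> \<Gamma> \<and> dist z c < \<delta>}"

lemma fiber_fiberwise_nbhd: "{z. (x, z) \<in> fiberwise_nbhd \<Gamma> \<delta>} = (\<Union>c\<in>{c. (x, c) \<in> \<Gamma>}. ball c \<delta>)"
  by (auto simp: fiberwise_nbhd_def dist_commute)

lemma subset_fiberwise_nbhd: "\<delta> > 0 \<Longrightarrow> \<Gamma> \<subseteq> fiberwise_nbhd \<Gamma> \<delta>"
  by (auto simp: fiberwise_nbhd_def)

lemma fiberwise_nbhd_mono: "\<delta> \<le> \<delta>' \<Longrightarrow> fiberwise_nbhd \<Gamma> \<delta> \<subseteq> fiberwise_nbhd \<Gamma> \<delta>'"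
  by (auto simp: fiberwise_nbhd_def)

lemma fiberwise_nbhd_ncurve_shift_iff:
  "(x + 1, z) \<in> fiberwise_nbhd (ncurve n \<gamma>) \<delta> \<longleftrightarrow> (x, z) \<in> fiberwise_nbhd (ncurve n \<gamma>) \<delta>"
  by (simp add: fiberwise_nbhd_def ncurve_shift_iff)

lemma open_fiberwise_nbhd_ncurve:
  assumes "continuous_on UNIV \<gamma>" and "n > 0"
  shows "open (fiberwise_nbhd (ncurve n \<gamma>) \<delta>)"
proof -
  have "fiberwise_nbhd (ncurve n \<gamma>) \<delta> = (\<Union>j::int. {y. dist (snd y) (\<gamma> ((fst y - j) / real n)) < \<delta>})"
  proof (intro equalityI subsetI)
    fix y assume "y \<in> fiberwise_nbhd (ncurve n \<gamma>) \<delta>"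
    then obtain t j where "dist (snd y) (\<gamma> t) < \<delta>" "fst y - real n * t = of_int j"
      by (auto simp: fiberwise_nbhd_def ncurve_def elim!: Ints_cases)
    moreover from this have "t = (fst y - j) / real n" using \<open>n > 0\<close> by (simp add: field_simps)
    ultimately show "y \<in> (\<Union>j::int. {y. dist (snd y) (\<gamma> ((fst y - j) / real n)) < \<delta>})" by auto
  next
    fix y assume "y \<in> (\<Union>j::int. {y. dist (snd y) (\<gamma> ((fst y - j) / real n)) < \<delta>})"
    then obtain j :: int where "dist (snd y) (\<gamma> ((fst y - j) / real n)) < \<delta>" by auto
    moreover have "fst y - real n * ((fst y - j) / real n) \<in> \<int>" using \<open>n > 0\<close> by simp
    ultimately show "y \<in> fiberwise_nbhd (ncurve n \<gamma>) \<delta>"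
      by (cases y) (force simp: fiberwise_nbhd_def ncurve_def)
  qed
  moreover have "open {y :: real \<times> complex. dist (snd y) (\<gamma> ((fst y - j) / real n)) < \<delta>}" for j :: int
  proof -
    have "continuous_on UNIV (\<lambda>y :: real \<times> complex. (fst y - j) / real n)"
      using assms(2) by (intro continuous_intros) auto
    then have "continuous_on UNIV (\<lambda>y :: real \<times> complex. \<gamma> ((fst y - j) / real n))"
      by (rule continuous_on_compose2[OF assms(1)]) auto
    then show ?thesis by (intro open_Collect_less continuous_intros)
  qed
  ultimately show ?thesis by auto
qed

lemma components_separated_balls:
  fixes C :: "'a::real_normed_vector set"
  assumes "\<delta> > 0" and sep: "\<And>c c'. c \<in> C \<Longrightarrow> c' \<in> C \<Longrightarrow> c \<noteq> c' \<Longrightarrow> 2 * \<delta> \<le> dist c c'"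
  shows "components (\<Union>c\<in>C. ball c \<delta>) = (\<lambda>c. ball c \<delta>) ` C"
proof (rule components_open_unique)
  have "disjnt (ball c \<delta>) (ball c' \<delta>)" if "c \<in> C" "c' \<in> C" "c \<noteq> c'" for c c'
    unfolding disjnt_iff mem_ball
  proof (intro allI notI)
    fix z assume "dist c z < \<delta> \<and> dist c' z < \<delta>"
    then show False
      using sep[OF that] dist_triangle3[of c c' z] dist_commute[of z c] dist_commute[of z c'] by linarith
  qed
  then show "pairwise disjnt ((\<lambda>c. ball c \<delta>) ` C)"
    by (auto simp: pairwise_def)
qed (use \<open>\<delta> > 0\<close> in auto)

lemma components_fiber_fiberwise_nbhd:
  fixes \<Gamma> :: "('a \<times> 'b::euclidean_space) set"
  assumes "\<delta> > 0"
    and sep: "\<And>c c'. (x, c) \<in> \<Gamma> \<Longrightarrow> (x, c') \<in> \<Gamma> \<Longrightarrow> c \<noteq> c' \<Longrightarrow> 2 * \<delta> \<le> dist c c'"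
  shows "components {z. (x, z) \<in> fiberwise_nbhd \<Gamma> \<delta>} = (\<lambda>c. ball c \<delta>) ` {c. (x, c) \<in> \<Gamma>}"
    and "card (components {z. (x, z) \<in> fiberwise_nbhd \<Gamma> \<delta>}) = card {c. (x, c) \<in> \<Gamma>}"
    and "C \<in> components {z. (x, z) \<in> fiberwise_nbhd \<Gamma> \<delta>} \<Longrightarrow> \<exists>z\<in>C. (x, z) \<in> \<Gamma>"
proof -
  show comps: "components {z. (x, z) \<in> fiberwise_nbhd \<Gamma> \<delta>} = (\<lambda>c. ball c \<delta>) ` {c. (x, c) \<in> \<Gamma>}"
    unfolding fiber_fiberwise_nbhd using \<open>\<delta> > 0\<close> sep by (intro components_separated_balls) auto
  have "inj_on (\<lambda>c. ball c \<delta>) {c. (x, c) \<in> \<Gamma>}"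
    using \<open>\<delta> > 0\<close> by (auto simp: inj_on_def ball_eq_ball_iff)
  then show "card (components {z. (x, z) \<in> fiberwise_nbhd \<Gamma> \<delta>}) = card {c. (x, c) \<in> \<Gamma>}"
    by (simp add: comps card_image)
  show "\<exists>z\<in>C. (x, z) \<in> \<Gamma>" if "C \<in> components {z. (x, z) \<in> fiberwise_nbhd \<Gamma> \<delta>}"
    using that \<open>\<delta> > 0\<close> by (auto simp: comps)
qed

section \<open>The basin of an attracting invariant n-curve\<close>

lemma fst_fibred_map_iterate: "fst ((fibred_map \<alpha> p ^^ k) y) = fst y + real k * \<alpha>"
  by (induction k) (simp_all add: fibred_map_def algebra_simps)

lemma snd_fibred_map_iterate_Suc:
  "snd ((fibred_map \<alpha> p ^^ Suc k) y) = poly (p (fst y + real k * \<alpha>)) (snd ((fibred_map \<alpha> p ^^ k) y))"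
  by (simp add: fibred_map_def fst_fibred_map_iterate)

lemma fiberwise_nbhd_ncurve_attracted:
  assumes per: "\<And>\<theta>. p (\<theta> + 1) = p \<theta>" and \<omega>: "real n * \<omega> = \<alpha> + real \<tau>"
    and basin: "\<And>t zs. cmod (zs 0 - \<gamma> t) < \<delta> \<Longrightarrow>
        (\<And>k. zs (Suc k) = poly (p (real n * (t + real k * \<omega>))) (zs k)) \<Longrightarrow>
        (\<lambda>k. cmod (zs k - \<gamma> (t + real k * \<omega>))) \<longlonglongrightarrow> 0"
    and y: "y \<in> fiberwise_nbhd (ncurve n \<gamma>) \<delta>"
  shows "(\<lambda>k. infdist ((fibred_map \<alpha> p ^^ k) y) (ncurve n \<gamma>)) \<longlonglongrightarrow> 0"
proof -
  obtain t where t: "fst y - real n * t \<in> \<int>" and close: "cmod (snd y - \<gamma> t) < \<delta>"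
    using y by (auto simp: fiberwise_nbhd_def ncurve_def dist_norm)
  define zs where "zs k = snd ((fibred_map \<alpha> p ^^ k) y)" for k
  have on_curve: "fst y + real k * \<alpha> - real n * (t + real k * \<omega>) \<in> \<int>" for k
  proof -
    have "real n * (t + real k * \<omega>) = real n * t + real k * (real n * \<omega>)"
      by (simp add: algebra_simps)
    then have eq: "fst y + real k * \<alpha> - real n * (t + real k * \<omega>)
                   = (fst y - real n * t) - of_nat (k * \<tau>)"
      unfolding \<omega> by (simp add: algebra_simps)
    show ?thesis unfolding eq by (rule Ints_diff[OF t Ints_of_nat])
  qed
  have step: "zs (Suc k) = poly (p (real n * (t + real k * \<omega>))) (zs k)" for k
  proof -
    have "zs (Suc k) = poly (p (fst y + real k * \<alpha>)) (zs k)"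
      unfolding zs_def by (rule snd_fibred_map_iterate_Suc)
    also have "p (fst y + real k * \<alpha>) = p (real n * (t + real k * \<omega>))"
      using periodic_shift_Ints[of p, OF per on_curve[of k], of "real n * (t + real k * \<omega>)"] by simp
    finally show ?thesis .
  qed
  have lim: "(\<lambda>k. cmod (zs k - \<gamma> (t + real k * \<omega>))) \<longlonglongrightarrow> 0"
    by (rule basin) (use close step in \<open>simp_all add: zs_def\<close>)
  have bound: "infdist ((fibred_map \<alpha> p ^^ k) y) (ncurve n \<gamma>) \<le> cmod (zs k - \<gamma> (t + real k * \<omega>))" for k
  proof -
    have "(fst y + real k * \<alpha>, \<gamma> (t + real k * \<omega>)) \<in> ncurve n \<gamma>"
      using on_curve[of k] by (auto simp: ncurve_def)
    then have "infdist ((fibred_map \<alpha> p ^^ k) y) (ncurve n \<gamma>)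
                 \<le> dist ((fibred_map \<alpha> p ^^ k) y) (fst y + real k * \<alpha>, \<gamma> (t + real k * \<omega>))"
      by (rule infdist_le)
    also have "\<dots> = cmod (zs k - \<gamma> (t + real k * \<omega>))"
    proof -
      have "(fibred_map \<alpha> p ^^ k) y = (fst y + real k * \<alpha>, zs k)"
        by (simp add: prod_eq_iff zs_def fst_fibred_map_iterate)
      then show ?thesis by (simp add: dist_Pair_Pair dist_norm)
    qed
    finally show ?thesis .
  qed
  then have "\<forall>k. norm (infdist ((fibred_map \<alpha> p ^^ k) y) (ncurve n \<gamma>))
               \<le> cmod (zs k - \<gamma> (t + real k * \<omega>))"
    by (simp add: infdist_nonneg)
  then show ?thesis by (rule Lim_null_comparison[OF always_eventually lim])
qed

lemma attracting_invariant_ncurve_lift: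
  assumes "fibred_poly_dynamics \<alpha> p" and "attracting_invariant_ncurve \<alpha> p n \<Gamma>"
  obtains \<gamma> \<tau> where "n > 0" "is_unfolding \<gamma>" "\<Gamma> = ncurve n \<gamma>"
    "attracting_curve ((\<alpha> + real \<tau>) / real n) (\<lambda>t. p (real n * t)) \<gamma>"
proof -
  from assms(1) have irr: "\<alpha> \<notin> \<rat>" and per: "\<And>\<theta>. p (\<theta> + 1) = p \<theta>"
    and degree: "\<exists>d. \<forall>\<theta>. degree (p \<theta>) \<le> d" and coeff: "\<And>i. continuous_on UNIV (\<lambda>\<theta>. coeff (p \<theta>) i)"
    unfolding fibred_poly_dynamics_def by auto
  from assms(2) obtain \<gamma> \<tau> where n: "n \<ge> 1" and unf: "is_unfolding \<gamma>" and \<Gamma>: "\<Gamma> = ncurve n \<gamma>"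
    and inv: "\<And>t. poly (p (frac (real n * t))) (\<gamma> t) = \<gamma> (t + (\<alpha> + real \<tau>) / real n)"
    and ae: "AE t in lebesgue_on {0..1}. poly (pderiv (p (frac (real n * t)))) (\<gamma> t) \<noteq> 0"
    and int: "integrable (lebesgue_on {0..1})
                (\<lambda>t. ln (cmod (poly (pderiv (p (frac (real n * t)))) (\<gamma> t))))"
    and lyap: "exp (integral\<^sup>L (lebesgue_on {0..1})
                 (\<lambda>t. ln (cmod (poly (pderiv (p (frac (real n * t)))) (\<gamma> t))))) < 1"
    unfolding attracting_invariant_ncurve_def by blast
  have frac_eq: "p (frac (real n * t)) = p (real n * t)" for t
    by (rule periodic_frac[of p, OF per])
  have "attracting_curve ((\<alpha> + real \<tau>) / real n) (\<lambda>t. p (real n * t)) \<gamma>"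
  proof
    show "(\<alpha> + real \<tau>) / real n \<notin> \<rat>"
    proof
      assume "(\<alpha> + real \<tau>) / real n \<in> \<rat>"
      then have "real n * ((\<alpha> + real \<tau>) / real n) - real \<tau> \<in> \<rat>" by (intro Rats_diff Rats_mult) auto
      moreover have "real n * ((\<alpha> + real \<tau>) / real n) - real \<tau> = \<alpha>" using n by simp
      ultimately show False using irr by simp
    qed
    show "continuous_on UNIV (\<lambda>t. coeff (p (real n * t)) i)" for i
      by (rule continuous_on_compose2[OF coeff]) (auto intro!: continuous_intros)
    show "\<exists>d. \<forall>t. degree (p (real n * t)) \<le> d" using degree by blast
    show "p (real n * (t + 1)) = p (real n * t)" for t
      using periodic_shift_Ints[of p, OF per, of "real n" "real n * t"] by (simp add: algebra_simps)
  qed (use unf inv ae int lyap in \<open>simp_all add: is_unfolding_def frac_eq\<close>)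
  with n unf \<Gamma> show thesis by (intro that) auto
qed

lemma attracting_invariant_ncurve_basin:
  assumes "fibred_poly_dynamics \<alpha> p" and "attracting_invariant_ncurve \<alpha> p n \<Gamma>"
  obtains \<gamma> \<delta> where "n > 0" "is_unfolding \<gamma>" "\<Gamma> = ncurve n \<gamma>" "\<delta> > 0"
    "\<And>y. y \<in> fiberwise_nbhd \<Gamma> \<delta> \<Longrightarrow> (\<lambda>k. infdist ((fibred_map \<alpha> p ^^ k) y) \<Gamma>) \<longlonglongrightarrow> 0"
proof -
  obtain \<gamma> \<tau> where n: "n > 0" and unf: "is_unfolding \<gamma>" and \<Gamma>: "\<Gamma> = ncurve n \<gamma>"
    and curve: "attracting_curve ((\<alpha> + real \<tau>) / real n) (\<lambda>t. p (real n * t)) \<gamma>"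
    using attracting_invariant_ncurve_lift[OF assms] by blast
  obtain \<delta> where "\<delta> > 0" and basin: "\<And>t zs. cmod (zs 0 - \<gamma> t) < \<delta> \<Longrightarrow>
      (\<And>k. zs (Suc k) = poly (p (real n * (t + real k * ((\<alpha> + real \<tau>) / real n)))) (zs k)) \<Longrightarrow>
      (\<lambda>k. cmod (zs k - \<gamma> (t + real k * ((\<alpha> + real \<tau>) / real n)))) \<longlonglongrightarrow> 0"
    using attracting_curve.uniform_basin[OF curve] by blast
  have per: "\<And>\<theta>. p (\<theta> + 1) = p \<theta>" using assms(1) by (simp add: fibred_poly_dynamics_def)
  have \<omega>: "real n * ((\<alpha> + real \<tau>) / real n) = \<alpha> + real \<tau>" using n by simp
  show thesis
    using that[OF n unf \<Gamma> \<open>\<delta> > 0\<close>] \<Gamma>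
      fiberwise_nbhd_ncurve_attracted[where p = p and n = n and \<alpha> = \<alpha> and \<tau> = \<tau>
        and \<omega> = "(\<alpha> + real \<tau>) / real n" and \<gamma> = \<gamma> and \<delta> = \<delta>, OF per \<omega> basin]
    by blast
qed

theorem mainTheorem4:
  fixes \<alpha> :: real and p :: "real \<Rightarrow> complex poly" and n :: nat
    and \<Gamma> :: "(real \<times> complex) set"
  assumes "fibred_poly_dynamics \<alpha> p"
    and "attracting_invariant_ncurve \<alpha> p n \<Gamma>"
  shows "\<exists>\<T> :: (real \<times> complex) set.
           open \<T> \<and> (\<forall>\<theta> z. (\<theta>, z) \<in> \<T> \<longleftrightarrow> (\<theta> + 1, z) \<in> \<T>) \<and> \<Gamma> \<subseteq> \<T> \<and>
           (\<forall>x\<in>\<T>. ((\<lambda>k. infdist ((fibred_map \<alpha> p ^^ k) x) \<Gamma>) \<longlongrightarrow> 0) sequentially) \<and>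
           (\<forall>\<theta>. card (components {z. (\<theta>, z) \<in> \<T>}) = n \<and>
                 (\<forall>C\<in>components {z. (\<theta>, z) \<in> \<T>}. \<exists>z\<in>C. (\<theta>, z) \<in> \<Gamma>))"
proof -
  obtain \<gamma> \<delta>\<^sub>0 where n: "n > 0" and unf: "is_unfolding \<gamma>" and \<Gamma>: "\<Gamma> = ncurve n \<gamma>"
    and "\<delta>\<^sub>0 > 0" and attracted: "\<And>y. y \<in> fiberwise_nbhd \<Gamma> \<delta>\<^sub>0 \<Longrightarrow>
      (\<lambda>k. infdist ((fibred_map \<alpha> p ^^ k) y) \<Gamma>) \<longlonglongrightarrow> 0"
    using attracting_invariant_ncurve_basin[OF assms] by blast
  obtain m where "m > 0" and sep: "\<And>\<theta> c c'. (\<theta>, c) \<in> \<Gamma> \<Longrightarrow> (\<theta>, c') \<in> \<Gamma> \<Longrightarrow> c \<noteq> c' \<Longrightarrow> m \<le> dist c c'"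
    using ncurve_fiber_separated[OF unf n] \<Gamma> by blast
  define \<delta> where "\<delta> = min \<delta>\<^sub>0 (m / 2)"
  have \<delta>: "\<delta> > 0" "\<delta> \<le> \<delta>\<^sub>0" using \<open>\<delta>\<^sub>0 > 0\<close> \<open>m > 0\<close> by (auto simp: \<delta>_def)
  have sep\<delta>: "\<And>\<theta> c c'. (\<theta>, c) \<in> \<Gamma> \<Longrightarrow> (\<theta>, c') \<in> \<Gamma> \<Longrightarrow> c \<noteq> c' \<Longrightarrow> 2 * \<delta> \<le> dist c c'"
    using sep by (force simp: \<delta>_def)
  have fibers: "card (components {z. (\<theta>, z) \<in> fiberwise_nbhd \<Gamma> \<delta>}) = n \<and>
      (\<forall>C\<in>components {z. (\<theta>, z) \<in> fiberwise_nbhd \<Gamma> \<delta>}. \<exists>z\<in>C. (\<theta>, z) \<in> \<Gamma>)" for \<theta>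
    using components_fiber_fiberwise_nbhd(2,3)[where x = \<theta> and \<Gamma> = \<Gamma>, OF \<delta>(1) sep\<delta>]
      card_ncurve_fiber[OF unf n] \<Gamma> by simp
  show ?thesis
  proof (intro exI[of _ "fiberwise_nbhd \<Gamma> \<delta>"] conjI allI ballI)
    show "open (fiberwise_nbhd \<Gamma> \<delta>)"
      using open_fiberwise_nbhd_ncurve unf n unfolding \<Gamma> is_unfolding_def by blast
    show "(\<theta>, z) \<in> fiberwise_nbhd \<Gamma> \<delta> \<longleftrightarrow> (\<theta> + 1, z) \<in> fiberwise_nbhd \<Gamma> \<delta>" for \<theta> z
      unfolding \<Gamma> by (rule fiberwise_nbhd_ncurve_shift_iff[symmetric])
  qed (use subset_fiberwise_nbhd[OF \<delta>(1)] attracted[OF subsetD[OF fiberwise_nbhd_mono[OF \<delta>(2)]]]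
      fibers in auto)
qed

end
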